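(* Let $n\ge 1$, let $(p_1,\dots,p_n)$ be a probability vector (i.e. $p_i\ge 0$ and $\sum_{i=1}^n p_i=1$), and let $\beta>0$. Let $n_0$ be the number of indices $i$ with $p_i=0$, and let $p_1',\dots,p_{n-n_0}'$ denote the strictly positive entries among $p_1,\dots,p_n$. Define the R\'enyi entropy of order $\beta$ (for $\beta\neq 1$) by \[ {_\beta}H_n(p_1,\dots,p_n)=(1-\beta)^{-1}\log_2\sum_{i=1}^n p_i^\beta . \] Then: \begin{enumerate} \item if $0<\beta<1$, \[ {_\beta}H_n(p_1,\dots,p_n)\ \ge\ (1-\beta)^{-1}\Big(\log_2(n-n_0)+\frac{\beta}{n-n_0}\sum_{i=1}^{n-n_0}\log_2 p_i'\Big); \] \item if $\beta>1$, \[ {_\beta}H_n(p_1,\dots,p_n)\ \le\ (1-\beta)^{-1}\Big(\log_2(n-n_0)+\frac{\beta}{n-n_0}\sum_{i=1}^{n-n_0}\log_2 p_i'\Big). \] \end{enumerate}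
   Context: Convention: $0^\beta=0$ for $\beta>0$. *)

theory Defs
  imports Complex_Main
begin

text \<open>Renyi entropy of order beta (beta ~= 1) of (p 1, ..., p n), base-2 logarithm.
  Note 0 powr beta = 0, matching the convention 0^beta = 0 for beta > 0.\<close>
definition renyi_entropy :: "real \<Rightarrow> nat \<Rightarrow> (nat \<Rightarrow> real) \<Rightarrow> real" where
  "renyi_entropy \<beta> n p = (1 / (1 - \<beta>)) * log 2 (\<Sum>i=1..n. p i powr \<beta>)"

end

theory Submission
  imports Defs
begin

text \<open>By concavity of the logarithm (AM-GM), the average of \<beta> log p_i = log p_i^\<beta> over the
  support is at most the logarithm of the average of the p_i^\<beta>. Zero entries contribute nothing
  to \<Sum> p_i^\<beta>, so log (n - n0) + \<beta>/(n - n0) \<Sum> log p'_i \<le> log \<Sum> p_i^\<beta>; multiplying by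
  1/(1 - \<beta>) gives both inequalities, the direction depending on its sign.\<close>

lemma sum_ln_le_card_mult_ln_mean:
  fixes x :: "'a \<Rightarrow> real"
  assumes "finite P" "P \<noteq> {}" "\<And>i. i \<in> P \<Longrightarrow> x i > 0"
  shows "(\<Sum>i\<in>P. ln (x i)) \<le> real (card P) * ln ((\<Sum>i\<in>P. x i) / real (card P))"
proof -
  define m where "m = real (card P)"
  have m: "m > 0" using assms by (simp add: m_def card_gt_0_iff)
  define A where "A = (\<Sum>i\<in>P. x i) / m"
  have "(\<Sum>i\<in>P. x i) > 0" using assms by (intro sum_pos) auto
  hence A: "A > 0" using m by (simp add: A_def)
  have "(\<Sum>i\<in>P. ln (x i) - ln A) = (\<Sum>i\<in>P. ln (x i / A))"
    using assms A by (intro sum.cong) (simp_all add: ln_div, fastforce)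
  also have "\<dots> \<le> (\<Sum>i\<in>P. x i / A - 1)"
    by (intro sum_mono ln_le_minus_one) (use assms A in auto)
  also have "\<dots> = (\<Sum>i\<in>P. x i) / A - m"
    by (simp add: sum_subtractf sum_divide_distrib m_def)
  also have "\<dots> = 0" using m A by (auto simp: A_def)
  finally show ?thesis by (simp add: sum_subtractf m_def [symmetric] A_def)
qed

lemma log_card_plus_mean_log_le_log_sum_powr:
  fixes p :: "'a \<Rightarrow> real"
  assumes "finite P" "P \<noteq> {}" "\<And>i. i \<in> P \<Longrightarrow> p i > 0"
  shows "log 2 (card P) + (\<beta> / card P) * (\<Sum>i\<in>P. log 2 (p i))
           \<le> log 2 (\<Sum>i\<in>P. p i powr \<beta>)"
proof -
  define m where "m = real (card P)"
  define S where "S = (\<Sum>i\<in>P. p i powr \<beta>)"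
  have m: "m > 0" using assms by (simp add: m_def card_gt_0_iff)
  have S: "S > 0" unfolding S_def using assms
    by (intro sum_pos) (auto simp: dual_order.strict_implies_not_eq)
  have "\<beta> * (\<Sum>i\<in>P. ln (p i)) = (\<Sum>i\<in>P. ln (p i powr \<beta>))"
    using assms(3) by (simp add: ln_powr sum_distrib_left)
  also have "\<dots> \<le> m * ln (S / m)"
    unfolding S_def m_def by (rule sum_ln_le_card_mult_ln_mean)
      (use assms in \<open>auto simp: dual_order.strict_implies_not_eq\<close>)
  finally have "ln m + (\<beta> / m) * (\<Sum>i\<in>P. ln (p i)) \<le> ln S"
    using m S by (simp add: ln_div field_simps)
  hence "(ln m + (\<beta> / m) * (\<Sum>i\<in>P. ln (p i))) / ln 2 \<le> ln S / ln 2"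
    by (simp add: divide_right_mono)
  thus ?thesis
    by (simp add: log_def add_divide_distrib sum_divide_distrib [symmetric] m_def S_def)
qed

lemma sum_atLeastAtMost_eq_sum_support:
  fixes p :: "nat \<Rightarrow> real"
  assumes "f 0 = 0"
  shows "(\<Sum>i=1..n. f (p i)) = (\<Sum>i\<in>{i \<in> {1..n}. p i \<noteq> 0}. f (p i))"
  using assms by (intro sum.mono_neutral_right) auto

theorem mainTheorem1:
  fixes n :: nat and p :: "nat \<Rightarrow> real" and \<beta> :: real
  assumes "n \<ge> 1"
    and "\<And>i. i \<in> {1..n} \<Longrightarrow> p i \<ge> 0"
    and "(\<Sum>i=1..n. p i) = 1"
    and "\<beta> > 0"
  defines "P \<equiv> {i \<in> {1..n}. p i > 0}"
  defines "n0 \<equiv> card {i \<in> {1..n}. p i = 0}"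
  shows "(\<beta> < 1 \<longrightarrow> renyi_entropy \<beta> n p \<ge>
            (1 / (1 - \<beta>)) * (log 2 (real (n - n0)) + (\<beta> / real (n - n0)) * (\<Sum>i\<in>P. log 2 (p i))))
       \<and> (\<beta> > 1 \<longrightarrow> renyi_entropy \<beta> n p \<le>
            (1 / (1 - \<beta>)) * (log 2 (real (n - n0)) + (\<beta> / real (n - n0)) * (\<Sum>i\<in>P. log 2 (p i))))"
proof -
  have support: "{i \<in> {1..n}. p i \<noteq> 0} = P"
    using assms(2) by (force simp: P_def)
  have "{1..n} = P \<union> {i \<in> {1..n}. p i = 0}"
    using assms(2) by (force simp: P_def)
  moreover have "P \<inter> {i \<in> {1..n}. p i = 0} = {}"
    by (auto simp: P_def)
  ultimately have "card {1..n} = card P + n0"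
    unfolding n0_def by (metis card_Un_disjoint finite_Un finite_atLeastAtMost)
  hence card_P: "n - n0 = card P" by simp
  have "(\<Sum>i\<in>P. p i) = 1"
    using assms(3) sum_atLeastAtMost_eq_sum_support [where f = "\<lambda>x. x" and p = p and n = n]
    unfolding support by simp
  moreover have "finite P" "\<And>i. i \<in> P \<Longrightarrow> p i > 0" by (simp_all add: P_def)
  ultimately have "log 2 (card P) + (\<beta> / card P) * (\<Sum>i\<in>P. log 2 (p i))
                     \<le> log 2 (\<Sum>i\<in>P. p i powr \<beta>)"
    by (intro log_card_plus_mean_log_le_log_sum_powr) auto
  also have "(\<Sum>i\<in>P. p i powr \<beta>) = (\<Sum>i=1..n. p i powr \<beta>)"
    using sum_atLeastAtMost_eq_sum_support [where f = "\<lambda>x. x powr \<beta>" and p = p and n = n]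
    unfolding support by simp
  finally have bound: "log 2 (n - n0) + (\<beta> / (n - n0)) * (\<Sum>i\<in>P. log 2 (p i))
                  \<le> log 2 (\<Sum>i=1..n. p i powr \<beta>)"
    unfolding card_P .
  show ?thesis
    unfolding renyi_entropy_def using bound
    by (intro conjI impI mult_left_mono mult_left_mono_neg) simp_all
qed

end
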